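(* Let $t_1\le\dots\le t_n$ and $s_1\le\dots\le s_m$ be real numbers, let $f:\mathbb{R}\to\mathbb{R}_{\ge0}$ be a weight function, and let $1\le i\le n$ and $1\le j\le m$. Let $M_{i,j}$ be a maximum-weight matching between $\{t_1,\dots,t_i\}$ and $\{s_1,\dots,s_j\}$ containing no two intersecting edges. If $t_i$ and $s_j$ are not matched to each other in $M_{i,j}$, then at least one of $t_i$, $s_j$ is not matched at all in $M_{i,j}$.
   Context: An edge is a pair $(t_a,s_b)$ with weight $f(s_b-t_a)$. A matching is a set of edges in which each element appears in at most one edge, and its weight is the sum of its edge weights. Two edges $(t_a,s_b)$ and $(t_{a'},s_{b'})$ intersect if $a<a'$ and $b>b'$. *)

theory Defs
  imports Complex_Main
begin

text \<open>Edges are represented by index pairs (a,b), standing for the edge (t_a, s_b).\<close>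

definition edge_weight :: "(nat \<Rightarrow> real) \<Rightarrow> (nat \<Rightarrow> real) \<Rightarrow> (real \<Rightarrow> real) \<Rightarrow> nat \<times> nat \<Rightarrow> real" where
  "edge_weight t s f e = f (s (snd e) - t (fst e))"

definition matching_weight :: "(nat \<Rightarrow> real) \<Rightarrow> (nat \<Rightarrow> real) \<Rightarrow> (real \<Rightarrow> real) \<Rightarrow> (nat \<times> nat) set \<Rightarrow> real" where
  "matching_weight t s f M = (\<Sum>e\<in>M. edge_weight t s f e)"

definition is_matching :: "nat \<Rightarrow> nat \<Rightarrow> (nat \<times> nat) set \<Rightarrow> bool" where
  "is_matching i j M \<longleftrightarrow> M \<subseteq> {1..i} \<times> {1..j} \<and>
     (\<forall>a b b'. (a, b) \<in> M \<and> (a, b') \<in> M \<longrightarrow> b = b') \<and>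
     (\<forall>a a' b. (a, b) \<in> M \<and> (a', b) \<in> M \<longrightarrow> a = a')"

definition edges_intersect :: "nat \<times> nat \<Rightarrow> nat \<times> nat \<Rightarrow> bool" where
  "edges_intersect e e' \<longleftrightarrow> fst e < fst e' \<and> snd e > snd e'"

definition noncrossing :: "(nat \<times> nat) set \<Rightarrow> bool" where
  "noncrossing M \<longleftrightarrow> (\<forall>e\<in>M. \<forall>e'\<in>M. \<not> edges_intersect e e')"

definition max_noncrossing_matching ::
  "(nat \<Rightarrow> real) \<Rightarrow> (nat \<Rightarrow> real) \<Rightarrow> (real \<Rightarrow> real) \<Rightarrow> nat \<Rightarrow> nat \<Rightarrow> (nat \<times> nat) set \<Rightarrow> bool" where
  "max_noncrossing_matching t s f i j M \<longleftrightarrow>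
     is_matching i j M \<and> noncrossing M \<and>
     (\<forall>M'. is_matching i j M' \<and> noncrossing M' \<longrightarrow> matching_weight t s f M' \<le> matching_weight t s f M)"

end

theory Submission
  imports Defs
begin

text \<open>Only the noncrossing property matters: if t_i is matched to s_b and s_j to t_a with
  a < i and b < j, these two edges intersect.\<close>

lemma noncrossing_corner_edge:
  assumes nc: "noncrossing M" and M: "M \<subseteq> {..i} \<times> {..j}"
    and ib: "(i, b) \<in> M" and aj: "(a, j) \<in> M"
  shows "(i, j) \<in> M"
proof (rule ccontr)
  assume not_ij: "(i, j) \<notin> M"
  with ib aj have "a \<noteq> i" "b \<noteq> j" by auto
  moreover have "a \<le> i" "b \<le> j" using M ib aj by auto
  ultimately have "edges_intersect (a, j) (i, b)"
    unfolding edges_intersect_def by simp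
  with nc aj ib show False
    unfolding noncrossing_def by blast
qed

lemma max_noncrossing_matchingD:
  assumes "max_noncrossing_matching t s f i j M"
  shows "noncrossing M" "M \<subseteq> {..i} \<times> {..j}"
proof -
  have "M \<subseteq> {1..i} \<times> {1..j}" "noncrossing M"
    using assms unfolding max_noncrossing_matching_def is_matching_def by simp_all
  moreover have "{1..i} \<times> {1..j} \<subseteq> {..i} \<times> {..j}" by auto
  ultimately show "noncrossing M" "M \<subseteq> {..i} \<times> {..j}" by simp_all
qed

theorem mainTheorem5:
  fixes t s :: "nat \<Rightarrow> real" and f :: "real \<Rightarrow> real" and n m i j :: nat
    and M :: "(nat \<times> nat) set"
  assumes t_sorted: "\<And>a b. 1 \<le> a \<Longrightarrow> a \<le> b \<Longrightarrow> b \<le> n \<Longrightarrow> t a \<le> t b"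
    and s_sorted: "\<And>a b. 1 \<le> a \<Longrightarrow> a \<le> b \<Longrightarrow> b \<le> m \<Longrightarrow> s a \<le> s b"
    and f_nonneg: "\<And>x. f x \<ge> 0"
    and i: "1 \<le> i" "i \<le> n" and j: "1 \<le> j" "j \<le> m"
    and M: "max_noncrossing_matching t s f i j M"
    and not_ij: "(i, j) \<notin> M"
  shows "(\<forall>b. (i, b) \<notin> M) \<or> (\<forall>a. (a, j) \<notin> M)"
  using noncrossing_corner_edge[OF max_noncrossing_matchingD[OF M]] not_ij by blast

end
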